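(* Let $n$ be an integer, $g(m)=10^{m/5}$, and for real $x$ with $2\le x\le n-2$ let $p(x)=(x-1)g(n-1-x)+g(n-2-x)$. Then $p$ is decreasing on $[3,n-2]$, and \[ p(3)=\max\{p(x): x\in\mathbb{Z}^+,\ 2\le x\le n-2\}. \] *)

theory Defs
  imports Complex_Main
begin

definition g :: "real \<Rightarrow> real" where
  "g m = 10 powr (m / 5)"

definition p :: "int \<Rightarrow> real \<Rightarrow> real" where
  "p n x = (x - 1) * g (real_of_int n - 1 - x) + g (real_of_int n - 2 - x)"

end

theory Submission
  imports Defs
begin

text \<open>With \<open>c = 10 powr (1/5)\<close> we have \<open>p n x = c\<^bsup>n-1\<^esup> c\<^bsup>-x\<^esup> (x - 1 + 1/c)\<close>. Since
  \<open>e\<^sup>t \<ge> 1 + t\<close>, the factor \<open>c\<^bsup>-x\<^esup>\<close> decays faster than the linear factor grows as soon as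
  \<open>ln c \<cdot> (x - 1 + 1/c) > 1\<close>, which holds for \<open>x \<ge> 3\<close> because \<open>ln c > 2/5\<close> and
  \<open>1/c > 1/2\<close>. The only integer left is \<open>x = 2\<close>, and \<open>p n 2 < p n 3\<close> amounts to
  \<open>c\<^sup>2 < c + 1\<close>, i.e. \<open>c\<close> lies below the golden ratio; indeed \<open>c < 8/5\<close>.\<close>

lemma powr_neg_mult_strict_decreasing:
  fixes a b x y :: real
  assumes "1 < b" and "1 < ln b * (x + a)" and "x < y"
  shows "b powr - y * (y + a) < b powr - x * (x + a)"
proof -
  define d where "d = y - x"
  have "0 < d" "0 < ln b" using assms by (simp_all add: d_def)
  with assms(2) have "0 < x + a" using zero_less_mult_pos[of "ln b" "x + a"] by linarith
  have "y + a = (x + a) + d" by (simp add: d_def)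
  also have "\<dots> < (x + a) + ln b * d * (x + a)"
    using assms(2) \<open>0 < d\<close> by (simp add: mult.commute mult.left_commute)
  also have "\<dots> = (1 + ln b * d) * (x + a)" by algebra
  also have "\<dots> \<le> b powr d * (x + a)"
    using exp_ge_add_one_self[of "ln b * d"] \<open>0 < x + a\<close> assms(1)
    by (intro mult_right_mono) (simp_all add: powr_def mult.commute)
  finally have "b powr - y * (y + a) < b powr - y * (b powr d * (x + a))"
    using assms(1) by simp
  also have "\<dots> = b powr - x * (x + a)"
    by (simp add: d_def mult.assoc flip: powr_add)
  finally show ?thesis .
qed

lemma two_less_ln_10: "2 < ln (10::real)"
proof -
  have "exp (2::real) = exp 1 ^ 2" by (metis power2_eq_square exp_add one_add_one)
  also have "\<dots> \<le> 3 ^ 2" using exp_le by (intro power_mono) auto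
  finally have "ln (exp 2) < ln (10::real)" by (intro ln_strict_mono) auto
  then show ?thesis by simp
qed

lemma fifth_root_10_less: "10 powr (1/5) < (8/5::real)"
proof (rule power_less_imp_less_base)
  have "(10 powr (1/5)) ^ 5 = (10::real) powr (1/5 * 5)"
    by (subst powr_realpow[symmetric]) (simp_all add: powr_powr)
  then show "(10 powr (1/5)) ^ 5 < (8/5::real) ^ 5"
    by (simp add: power_divide)
qed simp

lemma g_eq_powr: "g m = (10 powr (1/5)) powr m"
  by (simp add: g_def powr_powr)

lemma p_eq_powr:
  defines "c \<equiv> 10 powr (1/5)"
  shows "p n x = c powr (real_of_int n - 1) * (c powr - x * (x + (1/c - 1)))"
proof -
  have "c powr (real_of_int n - 1 - x) = c powr (real_of_int n - 1) * c powr - x"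
    by (simp flip: powr_add)
  moreover have "c powr (real_of_int n - 2 - x) = c powr (real_of_int n - 1) * c powr - x * c powr - 1"
    unfolding powr_add[symmetric] by (simp add: algebra_simps)
  moreover have "c powr - 1 = 1 / c"
    by (simp add: c_def powr_minus_divide)
  ultimately show ?thesis
    unfolding p_def g_eq_powr c_def[symmetric] by (simp add: algebra_simps)
qed

lemma p_strict_decreasing:
  assumes "3 \<le> x" and "x < y"
  shows "p n y < p n x"
proof -
  define c :: real where "c = 10 powr (1/5)"
  have "1 < c" "c < 8/5"
    using fifth_root_10_less by (simp_all add: c_def)
  have "2/5 < ln c"
    using two_less_ln_10 by (simp add: c_def ln_powr)
  moreover have "5/8 < 1/c"
    using \<open>c < 8/5\<close> \<open>1 < c\<close> by (simp add: field_simps)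
  then have "5/2 < x + (1/c - 1)"
    using assms(1) by linarith
  ultimately have "2/5 * (5/2) < ln c * (x + (1/c - 1))"
    by (intro mult_strict_mono) auto
  then have "c powr - y * (y + (1/c - 1)) < c powr - x * (x + (1/c - 1))"
    using \<open>1 < c\<close> assms(2) by (intro powr_neg_mult_strict_decreasing) auto
  then show ?thesis
    unfolding p_eq_powr c_def[symmetric] using \<open>1 < c\<close> by simp
qed

lemma p_2_less_p_3: "p n 2 < p n 3"
proof -
  define c :: real where "c = 10 powr (1/5)"
  have "1 < c" "c < 8/5"
    using fifth_root_10_less by (simp_all add: c_def)
  then have "c * c < 8/5 * c"
    by (intro mult_strict_right_mono) auto
  with \<open>c < 8/5\<close> have "c * c < c + 1"
    by linarith
  then have "c + 1 < 2 + 1/c"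
    using \<open>1 < c\<close> by (simp add: field_simps)
  then have "c powr - 3 * (c + 1) < c powr - 3 * (3 + (1/c - 1))"
    using \<open>1 < c\<close> by simp
  moreover have "c powr - 2 * (2 + (1/c - 1)) = c powr - 3 * (c + 1)"
    using \<open>1 < c\<close> powr_add[of c "- 3" 1] by (simp add: field_simps)
  ultimately show ?thesis
    unfolding p_eq_powr c_def[symmetric] using \<open>1 < c\<close> by simp
qed

lemma p_of_int_le_p_3:
  assumes "2 \<le> k"
  shows "p n (real_of_int k) \<le> p n 3"
proof -
  consider "k = 2" | "k = 3" | "3 < k" using assms by linarith
  then show ?thesis
    by cases (use p_2_less_p_3[of n] p_strict_decreasing[of 3 "real_of_int k" n] in simp_all)
qed

theorem lemma2p9:
  fixes n :: int
  assumes "n \<ge> 5"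
  shows "(\<forall>x y. 3 \<le> x \<and> x < y \<and> y \<le> real_of_int n - 2 \<longrightarrow> p n y < p n x)
         \<and> p n 3 = Max ((\<lambda>x. p n (real_of_int x)) ` {x::int. 0 < x \<and> 2 \<le> x \<and> x \<le> n - 2})"
proof
  show "\<forall>x y. 3 \<le> x \<and> x < y \<and> y \<le> real_of_int n - 2 \<longrightarrow> p n y < p n x"
    using p_strict_decreasing by blast
  let ?S = "{x::int. 0 < x \<and> 2 \<le> x \<and> x \<le> n - 2}"
  have "finite ?S"
    by (rule finite_subset[of _ "{2..n-2}"]) auto
  moreover have "p n 3 \<in> (\<lambda>x. p n (real_of_int x)) ` ?S"
    using assms by (intro rev_image_eqI[of 3]) auto
  ultimately show "p n 3 = Max ((\<lambda>x. p n (real_of_int x)) ` ?S)"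
    by (intro Max_eqI[symmetric]) (auto intro: p_of_int_le_p_3)
qed

end
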